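(* Let $\lambda_{\max}>1$ and let $F:[0,\lambda_{\max}]\to\mathbb{R}_+$ be a continuously differentiable strictly concave function with $F(0)=0$, such that $F(x)<F^\star$ for all $x\in[0,1)$ and $F'(1)>0$. Suppose moreover that $F$ is thrice continuously differentiable on $(1,\lambda_{\max}]$, that $\lim_{x\to1^+}F''(x)<0$, and that $\sup_{x>1}|F^{(3)}(x)|\le M$ for some $M<\infty$. Then there exist $C_1,\varepsilon_0>0$ (depending on $F$) such that $q^\star(\varepsilon)\ge C_1/\sqrt{\varepsilon}$ for all $\varepsilon\in(0,\varepsilon_0]$.
   Context: A control policy is a function $\lambda:\mathbb{Z}_+\to[0,\lambda_{\max}]$; it defines a continuous-time birth–death chain on $\mathbb{Z}_+$ with rate $\lambda(q)$ from $q$ to $q+1$ and rate $1$ from $q$ to $q-1$ ($q\ge1$). Let $\mathcal S$ be the set of states reachable from $0$. The policy is stable if $\sum_{i\in\mathcal S}\prod_{q=0}^{i}\lambda(q)<\infty$ (positive recurrence on $\mathcal S$); then $\pi$ is its stationary distribution and $\bar q\sim\pi$. $F^\star=\sup\{\mathbb{E}_\alpha[F(X)]:\alpha$ a probability measure on $[0,\lambda_{\max}]$, $X\sim\alpha$, $\mathbb{E}_\alpha[X]\le1\}$; regret $R(\lambda)=F^\star-\mathbb{E}_\pi[F(\lambda(\bar q))]$; $q^\star(\varepsilon)=\inf\{\mathbb{E}_\pi[\bar q]:\lambda$ stable, $R(\lambda)\le\varepsilon\}$. *)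

theory Defs
  imports "HOL-Probability.Probability"
begin

definition strict_concave_on :: "real set \<Rightarrow> (real \<Rightarrow> real) \<Rightarrow> bool" where
  "strict_concave_on A F \<longleftrightarrow>
     (\<forall>x\<in>A. \<forall>y\<in>A. \<forall>t::real. x \<noteq> y \<and> 0 < t \<and> t < 1 \<longrightarrow>
        (1 - t) * F x + t * F y < F ((1 - t) * x + t * y))"

definition policy :: "real \<Rightarrow> (nat \<Rightarrow> real) \<Rightarrow> bool" where
  "policy lmax lam \<longleftrightarrow> (\<forall>q. 0 \<le> lam q \<and> lam q \<le> lmax)"

text \<open>States reachable from 0 in the birth-death chain (up-rate lam q, down-rate 1).\<close>
definition reachable :: "(nat \<Rightarrow> real) \<Rightarrow> nat set" where
  "reachable lam = {i. \<forall>q<i. 0 < lam q}"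

definition stable :: "(nat \<Rightarrow> real) \<Rightarrow> bool" where
  "stable lam \<longleftrightarrow> (\<lambda>i. \<Prod>q\<le>i. lam q) summable_on reachable lam"

definition stationary :: "(nat \<Rightarrow> real) \<Rightarrow> (nat \<Rightarrow> real) \<Rightarrow> bool" where
  "stationary lam p \<longleftrightarrow>
     (\<forall>i. 0 \<le> p i) \<and> (\<forall>i. i \<notin> reachable lam \<longrightarrow> p i = 0) \<and> p sums 1 \<and>
     p 0 * lam 0 = p 1 \<and>
     (\<forall>q\<ge>1. p q * (lam q + 1) = p (q - 1) * lam (q - 1) + p (q + 1))"

definition Fstar :: "real \<Rightarrow> (real \<Rightarrow> real) \<Rightarrow> real" where
  "Fstar lmax F = Sup {(LINT x:{0..lmax}|\<alpha>. F x) | \<alpha>.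
      prob_space \<alpha> \<and> sets \<alpha> = sets borel \<and> measure \<alpha> {0..lmax} = 1 \<and>
      (LINT x|\<alpha>. x) \<le> 1}"

definition regret :: "real \<Rightarrow> (real \<Rightarrow> real) \<Rightarrow> (nat \<Rightarrow> real) \<Rightarrow> (nat \<Rightarrow> real) \<Rightarrow> real" where
  "regret lmax F lam p = Fstar lmax F - (\<Sum>i. p i * F (lam i))"

definition mean_queue :: "(nat \<Rightarrow> real) \<Rightarrow> ereal" where
  "mean_queue p = (\<Sum>i. ereal (p i * real i))"

definition qstar :: "real \<Rightarrow> (real \<Rightarrow> real) \<Rightarrow> real \<Rightarrow> ereal" where
  "qstar lmax F \<epsilon> = Inf {mean_queue p | lam p.
      policy lmax lam \<and> stable lam \<and> stationary lam p \<and> regret lmax F lam p \<le> \<epsilon>}"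

end

theory Submission
  imports Defs
begin

(* Concavity gives the tangent bound F x <= F 1 + F'(1) (x - 1), and F''(1+) < 0 strengthens it
   to a quadratic deficit c (x - 1)^2 for x >= 1.  Summing these bounds against the stationary
   distribution p, and using the flow balance sum_q p q lam q = 1 - p 0, shows that a policy of
   regret eps has p 0 <= eps / F'(1) and sum_q p q (lam q - 1)_+^2 <= eps / c.  Since
   p (q + 1) = p q lam q, the increments of p are at most p q (lam q - 1)_+, and AM-GM bounds
   their sum by O(sqrt eps); so every p q is O(sqrt eps), the mass must spread over
   Omega(1 / sqrt eps) states, and the mean queue length is Omega(1 / sqrt eps). *)

lemma strict_concave_on_imp_concave_on:
  assumes "convex A" and "strict_concave_on A F"
  shows "concave_on A F"
proof (rule concave_on_linorderI)
  fix t x y :: real assume "0 < t" "t < 1" "x \<in> A" "y \<in> A" "x < y"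
  then show "(1 - t) * F x + t * F y \<le> F ((1 - t) *\<^sub>R x + t *\<^sub>R y)"
    using assms(2) unfolding strict_concave_on_def by force
qed (fact assms(1))

lemma concave_on_below_tangent:
  fixes f :: "real \<Rightarrow> real"
  assumes "concave_on A f" and "connected A" and "c \<in> interior A" and "x \<in> A"
    and "(f has_real_derivative f') (at c within A)"
  shows "f x \<le> f c + f' * (x - c)"
proof -
  have "((\<lambda>x. - f x) has_real_derivative - f') (at c within A)"
    using assms(5) by (rule DERIV_minus)
  from convex_on_imp_above_tangent[OF assms(1)[unfolded concave_on_def] assms(2-4) this]
  show ?thesis by (simp add: algebra_simps)
qed

lemma DERIV_le_imp_diff_le:
  fixes f g :: "real \<Rightarrow> real"
  assumes "a \<le> b" and "continuous_on {a..b} f" and "continuous_on {a..b} g"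
    and "\<And>x. a < x \<Longrightarrow> x < b \<Longrightarrow> (f has_real_derivative f' x) (at x)"
    and "\<And>x. a < x \<Longrightarrow> x < b \<Longrightarrow> (g has_real_derivative g' x) (at x)"
    and "\<And>x. a < x \<Longrightarrow> x < b \<Longrightarrow> f' x \<le> g' x"
  shows "f b - f a \<le> g b - g a"
proof -
  have "(\<lambda>x. f x - g x) b \<le> (\<lambda>x. f x - g x) a"
  proof (rule DERIV_nonpos_imp_decreasing_open[OF assms(1)])
    fix x assume "a < x" "x < b"
    then show "\<exists>y. ((\<lambda>x. f x - g x) has_real_derivative y) (at x) \<and> y \<le> 0"
      using assms(4-6) by (intro exI[of _ "f' x - g' x"]) (auto intro: DERIV_diff)
  qed (intro continuous_on_diff assms(2,3))
  then show ?thesis by simp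
qed

lemma local_quadratic_bound_right:
  fixes F F' F'' :: "real \<Rightarrow> real"
  assumes "a < b" and F_cont: "continuous_on {a..b} F" and F'_cont: "continuous_on {a..b} F'"
    and F': "\<And>x. a < x \<Longrightarrow> x < b \<Longrightarrow> (F has_real_derivative F' x) (at x)"
    and F'': "\<And>x. a < x \<Longrightarrow> x < b \<Longrightarrow> (F' has_real_derivative F'' x) (at x)"
    and lim: "(F'' \<longlongrightarrow> L) (at_right a)" and "L < 0"
  shows "\<exists>d\<in>{a<..b}. \<forall>y\<in>{a..d}. F y \<le> F a + F' a * (y - a) + L / 4 * (y - a)\<^sup>2"
proof -
  have "eventually (\<lambda>x. F'' x < L / 2) (at_right a)"
    using order_tendstoD(2)[OF lim, of "L / 2"] \<open>L < 0\<close> by linarith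
  then obtain d0 where "d0 > a" and d0: "\<And>x. a < x \<Longrightarrow> x < d0 \<Longrightarrow> F'' x \<le> L / 2"
    by (force simp: eventually_at_right_field)
  define d where "d = min d0 b"
  have "a < d" "d \<le> b" using \<open>d0 > a\<close> \<open>a < b\<close> by (auto simp: d_def)
  have F'_slope: "F' y - F' a \<le> L / 2 * y - L / 2 * a" if "a \<le> y" "y \<le> d" for y
    using that \<open>d \<le> b\<close> d0
    by (intro DERIV_le_imp_diff_le[where f' = F'' and g' = "\<lambda>_. L / 2"])
       (auto simp: d_def intro!: continuous_on_subset[OF F'_cont] continuous_intros F''
             derivative_eq_intros)
  have "F y - F a \<le> (F' a * y + L / 4 * (y - a)\<^sup>2) - (F' a * a + L / 4 * (a - a)\<^sup>2)"
    if "a \<le> y" "y \<le> d" for y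
  proof (rule DERIV_le_imp_diff_le[where f' = F' and g' = "\<lambda>x. F' a + L / 2 * (x - a)"])
    fix x assume "a < x" "x < y"
    then show "((\<lambda>x. F' a * x + L / 4 * (x - a)\<^sup>2) has_real_derivative F' a + L / 2 * (x - a)) (at x)"
      by (auto intro!: derivative_eq_intros simp: field_simps)
    show "F' x \<le> F' a + L / 2 * (x - a)"
      using F'_slope[of x] \<open>a < x\<close> \<open>x < y\<close> \<open>y \<le> d\<close> by (simp add: field_simps)
  qed (use that \<open>d \<le> b\<close> in \<open>auto intro!: continuous_on_subset[OF F_cont] continuous_intros F'\<close>)
  then show ?thesis
    using \<open>a < d\<close> \<open>d \<le> b\<close> by (intro bexI[of _ d]) (auto simp: algebra_simps)
qed

lemma concave_on_extend_quadratic_bound: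
  fixes F :: "real \<Rightarrow> real"
  assumes conc: "concave_on {a..b} F" and "a < d" "d \<le> b" "0 \<le> c"
    and local: "\<forall>y\<in>{a..d}. F y \<le> F a + s * (y - a) - c * (y - a)\<^sup>2"
    and x: "x \<in> {a..b}"
  shows "F x \<le> F a + s * (x - a) - c * (d - a) / (b - a) * (x - a)\<^sup>2"
proof (cases "x \<le> d")
  case True
  have "c * ((d - a) / (b - a)) \<le> c"
    using \<open>a < d\<close> \<open>d \<le> b\<close> \<open>0 \<le> c\<close> by (intro mult_left_le) auto
  then have "c * (d - a) / (b - a) * (x - a)\<^sup>2 \<le> c * (x - a)\<^sup>2"
    by (intro mult_right_mono) auto
  moreover have "F x \<le> F a + s * (x - a) - c * (x - a)\<^sup>2" using local True x by simp
  ultimately show ?thesis by linarith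
next
  case False
  define t where "t = (d - a) / (x - a)"
  have t: "0 \<le> t" "t \<le> 1" using False \<open>a < d\<close> by (auto simp: t_def)
  have "t * (x - a) = d - a" using False \<open>a < d\<close> by (simp add: t_def)
  then have d_eq: "d = (1 - t) * a + t * x" by (simp add: algebra_simps)
  have "(1 - t) * F a + t * F x \<le> F d"
    using concave_onD[OF conc t] x \<open>a < d\<close> \<open>d \<le> b\<close> by (simp add: d_eq)
  also have "\<dots> \<le> F a + s * (d - a) - c * (d - a)\<^sup>2"
    using local \<open>a < d\<close> by simp
  finally have "t * (F x - F a - s * (x - a)) \<le> - c * (d - a)\<^sup>2"
    by (simp add: d_eq algebra_simps)
  moreover have "t > 0" using False \<open>a < d\<close> by (simp add: t_def)
  ultimately have "F x - F a - s * (x - a) \<le> - c * (d - a)\<^sup>2 / t"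
    by (simp add: field_simps)
  also have "\<dots> = - c * (d - a) * (x - a)"
    using False \<open>a < d\<close> by (simp add: t_def power2_eq_square)
  also have "\<dots> \<le> - c * (d - a) / (b - a) * (x - a)\<^sup>2"
  proof -
    have "(x - a) / (b - a) \<le> 1" using x False \<open>a < d\<close> by simp
    then have "c * (d - a) * (x - a) * ((x - a) / (b - a)) \<le> c * (d - a) * (x - a)"
      using False \<open>0 \<le> c\<close> \<open>a < d\<close> by (intro mult_left_le) auto
    then show ?thesis by (simp add: power2_eq_square mult.assoc)
  qed
  finally show ?thesis by simp
qed

lemma quadratic_bound_right:
  fixes F F' F'' :: "real \<Rightarrow> real"
  assumes "a < b" and "concave_on {a..b} F"
    and "continuous_on {a..b} F" and "continuous_on {a..b} F'"
    and "\<And>x. a < x \<Longrightarrow> x < b \<Longrightarrow> (F has_real_derivative F' x) (at x)"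
    and "\<And>x. a < x \<Longrightarrow> x < b \<Longrightarrow> (F' has_real_derivative F'' x) (at x)"
    and "(F'' \<longlongrightarrow> L) (at_right a)" and "L < 0"
  shows "\<exists>c>0. \<forall>x\<in>{a..b}. F x \<le> F a + F' a * (x - a) - c * (x - a)\<^sup>2"
proof -
  obtain d where d: "a < d" "d \<le> b"
    and local: "\<forall>y\<in>{a..d}. F y \<le> F a + F' a * (y - a) - (- L / 4) * (y - a)\<^sup>2"
    using local_quadratic_bound_right[OF assms(1,3-8)] by auto
  have "0 < - L / 4 * (d - a) / (b - a)"
    using d \<open>L < 0\<close> by (intro divide_pos_pos mult_pos_pos) auto
  with concave_on_extend_quadratic_bound[OF assms(2) d _ local] \<open>L < 0\<close> show ?thesis
    by (intro exI[of _ "- L / 4 * (d - a) / (b - a)"]) auto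
qed

lemma Fstar_ge:
  fixes F :: "real \<Rightarrow> real"
  assumes cont: "continuous_on {0..lmax} F" and x: "x \<in> {0..lmax}" "x \<le> 1"
  shows "F x \<le> Fstar lmax F"
proof -
  \<comment> \<open>\<open>0 \<le> B\<close> is needed because the integral of a non-integrable function is 0\<close>
  obtain B where B: "\<And>y. y \<in> {0..lmax} \<Longrightarrow> F y \<le> B" and "0 \<le> B"
  proof -
    have "bounded (F ` {0..lmax})" by (intro compact_imp_bounded compact_continuous_image cont) simp
    then obtain B where "\<forall>y\<in>{0..lmax}. \<bar>F y\<bar> \<le> B" by (auto simp: bounded_real)
    moreover have "0 \<le> B" using calculation x(1) abs_ge_zero order_trans by blast
    ultimately show ?thesis using that abs_le_D1 by blast
  qed
  let ?S = "{(LINT y:{0..lmax}|\<alpha>. F y) | \<alpha>.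
      prob_space \<alpha> \<and> sets \<alpha> = sets borel \<and> measure \<alpha> {0..lmax} = 1 \<and> (LINT y|\<alpha>. y) \<le> 1}"
  have "bdd_above ?S"
  proof (rule bdd_aboveI)
    fix z assume "z \<in> ?S"
    then obtain \<alpha> where z: "z = (LINT y:{0..lmax}|\<alpha>. F y)" and "prob_space \<alpha>" by auto
    show "z \<le> B"
    proof (cases "integrable \<alpha> (\<lambda>y. indicator {0..lmax} y *\<^sub>R F y)")
      case True
      have "(LINT y|\<alpha>. indicator {0..lmax} y *\<^sub>R F y) \<le> B"
        using B \<open>0 \<le> B\<close>
        by (intro prob_space.integral_le_const[OF \<open>prob_space \<alpha>\<close> True]) (auto simp: indicator_def)
      then show ?thesis using z by (simp add: set_lebesgue_integral_def)
    qed (use z \<open>0 \<le> B\<close> in \<open>simp add: set_lebesgue_integral_def not_integrable_integral_eq\<close>)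
  qed
  moreover have "F x \<in> ?S"
  proof -
    let ?\<delta> = "return borel x"
    have "(\<lambda>y. indicator {0..lmax} y *\<^sub>R F y) \<in> borel_measurable borel"
      by (rule borel_measurable_continuous_on_indicator[OF _ cont]) auto
    then have "F x = (LINT y:{0..lmax}|?\<delta>. F y)"
      using x by (simp add: set_lebesgue_integral_def integral_return)
    moreover have "(LINT y|?\<delta>. y) \<le> 1" using x by (subst integral_return) auto
    moreover have "measure ?\<delta> {0..lmax} = 1" using x by (simp add: measure_return)
    ultimately show ?thesis using prob_space_return[of x borel] by fastforce
  qed
  ultimately show ?thesis unfolding Fstar_def by (rule cSup_upper[rotated])
qed

lemma stationary_Suc:
  assumes "stationary lam p"
  shows "p (Suc q) = p q * lam q"
proof (induction q)
  case 0
  then show ?case using assms by (simp add: stationary_def)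
next
  case (Suc q)
  have "p (Suc q) * (lam (Suc q) + 1) = p q * lam q + p (Suc (Suc q))"
    using assms unfolding stationary_def by (metis Suc_eq_plus1 diff_Suc_1 le_add2)
  then show ?case using Suc by (simp add: algebra_simps)
qed

lemma stationary_sums_rate:
  assumes "stationary lam p"
  shows "(\<lambda>q. p q * lam q) sums (1 - p 0)"
proof -
  have "p sums (1 - p 0 + p 0)" using assms by (simp add: stationary_def)
  then have "(\<lambda>q. p (Suc q)) sums (1 - p 0)" by (simp only: sums_Suc_iff)
  then show ?thesis by (simp add: stationary_Suc[OF assms])
qed

lemma stationary_summable_bounded:
  assumes "stationary lam p" and "\<And>q. \<bar>g q\<bar> \<le> B"
  shows "summable (\<lambda>q. p q * g q)"
proof (rule summable_comparison_test)
  have "0 \<le> p q" for q using assms(1) by (simp add: stationary_def)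
  then show "\<exists>N. \<forall>q\<ge>N. norm (p q * g q) \<le> B * p q"
    using assms(2) by (metis abs_mult abs_of_nonneg mult.commute mult_right_mono real_norm_def)
  show "summable (\<lambda>q. B * p q)"
    using assms(1) by (intro summable_mult) (auto simp: stationary_def sums_summable)
qed

lemma regret_ge_quadratic_deficit:
  fixes F :: "real \<Rightarrow> real" and lam p :: "nat \<Rightarrow> real"
  assumes pol: "policy lmax lam" and st: "stationary lam p"
    and nonneg: "\<forall>x\<in>{0..lmax}. 0 \<le> F x"
    and tangent: "\<forall>x\<in>{0..lmax}. F x \<le> F 1 + s * (x - 1)"
    and quad: "\<forall>x\<in>{1..lmax}. F x \<le> F 1 + s * (x - 1) - c * (x - 1)\<^sup>2"
    and Fstar: "F 1 \<le> Fstar lmax F"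
  shows "s * p 0 + c * (\<Sum>q. p q * (max (lam q - 1) 0)\<^sup>2) \<le> regret lmax F lam p"
proof -
  define u where "u q = max (lam q - 1) 0" for q
  have lam: "0 \<le> lam q" "lam q \<le> lmax" for q using pol by (auto simp: policy_def)
  have p_nonneg: "0 \<le> p q" for q using st by (simp add: stationary_def)
  have F_lam: "F (lam q) \<le> F 1 + s * (lam q - 1) - c * (u q)\<^sup>2" for q
    using tangent quad lam[of q] by (cases "lam q \<ge> 1") (auto simp: u_def)
  have "0 \<le> u q" "u q \<le> lmax" for q using lam[of q] lam(1)[of 0] by (auto simp: u_def)
  then have u_sums: "(\<lambda>q. p q * (u q)\<^sup>2) sums (\<Sum>q. p q * (u q)\<^sup>2)"
    by (intro summable_sums stationary_summable_bounded[OF st, of _ "lmax\<^sup>2"])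
       (auto intro!: power_mono)
  have F_sums: "(\<lambda>q. p q * F (lam q)) sums (\<Sum>q. p q * F (lam q))"
  proof (intro summable_sums stationary_summable_bounded[OF st])
    fix q
    have "F (lam q) \<le> F 1 + s * (lam q - 1)" using tangent lam[of q] by simp
    also have "\<dots> \<le> \<bar>F 1\<bar> + \<bar>s\<bar> * \<bar>lam q - 1\<bar>" by (simp add: abs_mult[symmetric])
    also have "\<dots> \<le> \<bar>F 1\<bar> + \<bar>s\<bar> * (lmax + 1)" using lam[of q] by (intro add_left_mono mult_left_mono) auto
    finally have "F (lam q) \<le> \<bar>F 1\<bar> + \<bar>s\<bar> * (lmax + 1)" .
    moreover have "0 \<le> F (lam q)" using nonneg lam[of q] by simp
    ultimately show "\<bar>F (lam q)\<bar> \<le> \<bar>F 1\<bar> + \<bar>s\<bar> * (lmax + 1)" by simp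
  qed
  have p_sums: "p sums 1" using st by (simp add: stationary_def)
  have bound_sums: "(\<lambda>q. F 1 * p q + s * (p q * lam q - p q) - c * (p q * (u q)\<^sup>2)) sums
      (F 1 * 1 + s * ((1 - p 0) - 1) - c * (\<Sum>q. p q * (u q)\<^sup>2))"
    by (intro sums_diff[OF sums_add[OF sums_mult[OF p_sums]
          sums_mult[OF sums_diff[OF stationary_sums_rate[OF st] p_sums]]] sums_mult[OF u_sums]])
  have "p q * F (lam q) \<le> F 1 * p q + s * (p q * lam q - p q) - c * (p q * (u q)\<^sup>2)" for q
    using mult_left_mono[OF F_lam p_nonneg] by (simp add: algebra_simps)
  then have "(\<Sum>q. p q * F (lam q)) \<le> F 1 - s * p 0 - c * (\<Sum>q. p q * (u q)\<^sup>2)"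
    using sums_le[OF _ F_sums bound_sums] by simp
  then show ?thesis using Fstar by (simp add: regret_def u_def)
qed

lemma le_of_growth_bound:
  fixes p u :: "nat \<Rightarrow> real"
  assumes p_nonneg: "\<And>q. 0 \<le> p q" and growth: "\<And>q. p (Suc q) \<le> p q * (1 + u q)"
    and p_sums: "p sums 1" and u_summable: "summable (\<lambda>q. p q * (u q)\<^sup>2)" and "a > 0"
  shows "p n \<le> p 0 + (\<Sum>q. p q * (u q)\<^sup>2) / (2 * a) + a / 2"
proof -
  have "p n \<le> p 0 + (\<Sum>q<n. p q * u q)"
  proof (induction n)
    case (Suc n)
    then show ?case using growth[of n] by (simp add: algebra_simps)
  qed simp
  also have "(\<Sum>q<n. p q * u q) \<le> (\<Sum>q<n. p q * (u q)\<^sup>2 / (2 * a) + a / 2 * p q)"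
  proof (rule sum_mono)
    fix q
    have "0 \<le> p q * (u q - a)\<^sup>2" using p_nonneg by simp
    then show "p q * u q \<le> p q * (u q)\<^sup>2 / (2 * a) + a / 2 * p q"
      using \<open>a > 0\<close> by (simp add: field_simps power2_eq_square)
  qed
  also have "\<dots> = (\<Sum>q<n. p q * (u q)\<^sup>2) / (2 * a) + a / 2 * (\<Sum>q<n. p q)"
    by (simp add: sum.distrib sum_divide_distrib sum_distrib_left)
  also have "\<dots> \<le> (\<Sum>q. p q * (u q)\<^sup>2) / (2 * a) + a / 2 * (\<Sum>q. p q)"
    using \<open>a > 0\<close> p_nonneg sums_summable[OF p_sums] u_summable
    by (intro add_mono divide_right_mono mult_left_mono sum_le_suminf) auto
  finally show ?thesis using sums_unique[OF p_sums] by simp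
qed

lemma mean_queue_ge_by_head_mass:
  fixes p :: "nat \<Rightarrow> real"
  assumes p_nonneg: "\<And>i. 0 \<le> p i" and p_sums: "p sums 1" and head: "(\<Sum>i<K. p i) \<le> \<theta>"
  shows "ereal (real K * (1 - \<theta>)) \<le> mean_queue p"
proof (rule tendsto_le[OF _ tendsto_const])
  have "(\<lambda>n. \<Sum>i<n. p i) \<longlonglongrightarrow> 1" using p_sums by (simp add: sums_def)
  then show "(\<lambda>n. ereal (real K * ((\<Sum>i<n. p i) - \<theta>))) \<longlonglongrightarrow> ereal (real K * (1 - \<theta>))"
    by (intro tendsto_intros)
  show "eventually (\<lambda>n. ereal (real K * ((\<Sum>i<n. p i) - \<theta>)) \<le> mean_queue p) sequentially"
    unfolding eventually_sequentially
  proof (intro exI allI impI)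
    fix n assume "K \<le> n"
    then have split: "(\<Sum>i<n. f i) = (\<Sum>i<K. f i) + (\<Sum>i\<in>{K..<n}. f i)" for f :: "nat \<Rightarrow> real"
      by (metis sum.atLeastLessThan_concat lessThan_atLeast0 zero_le)
    have "real K * ((\<Sum>i<n. p i) - \<theta>) \<le> (\<Sum>i\<in>{K..<n}. p i * real K)"
      using split[of p] head \<open>K \<le> n\<close>
      by (simp add: sum_distrib_left[symmetric] mult.commute[of _ "real K"] mult_left_mono)
    also have "\<dots> \<le> (\<Sum>i\<in>{K..<n}. p i * real i)"
      using p_nonneg by (intro sum_mono mult_left_mono) auto
    also have "\<dots> \<le> (\<Sum>i<n. p i * real i)"
      using split[of "\<lambda>i. p i * real i"] p_nonneg by (simp add: sum_nonneg)
    also have "ereal \<dots> = (\<Sum>i<n. ereal (p i * real i))" by simp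
    also have "\<dots> \<le> mean_queue p"
      unfolding mean_queue_def by (rule suminf_upper) (simp add: p_nonneg)
    finally show "ereal (real K * ((\<Sum>i<n. p i) - \<theta>)) \<le> mean_queue p" by simp
  qed
qed simp

lemma mean_queue_ge_of_le:
  fixes p :: "nat \<Rightarrow> real"
  assumes p_nonneg: "\<And>i. 0 \<le> p i" and p_sums: "p sums 1" and p_le: "\<And>i. p i \<le> \<delta>"
    and "0 < \<delta>" and "\<delta> \<le> 1 / 8"
  shows "ereal (3 / (32 * \<delta>)) \<le> mean_queue p"
proof -
  define K where "K = nat \<lfloor>1 / (4 * \<delta>)\<rfloor>"
  have K_le: "real K \<le> 1 / (4 * \<delta>)" and K_ge: "1 / (4 * \<delta>) - 1 \<le> real K"
    using \<open>0 < \<delta>\<close> by (auto simp: K_def)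
  have "(\<Sum>i<K. p i) \<le> real K * \<delta>"
    using sum_mono[of "{..<K}" p "\<lambda>_. \<delta>"] p_le by simp
  also have "\<dots> \<le> 1 / 4"
    using mult_right_mono[OF K_le, of \<delta>] \<open>0 < \<delta>\<close> by simp
  finally have "ereal (real K * (1 - 1 / 4)) \<le> mean_queue p"
    by (rule mean_queue_ge_by_head_mass[OF p_nonneg p_sums])
  moreover have "3 / (32 * \<delta>) \<le> real K * (1 - 1 / 4)"
    using K_ge \<open>0 < \<delta>\<close> \<open>\<delta> \<le> 1 / 8\<close> by (simp add: field_simps)
  ultimately show ?thesis by (meson ereal_less_eq(3) order.trans)
qed

lemma stationary_le_sqrt_regret:
  fixes F :: "real \<Rightarrow> real" and lam p :: "nat \<Rightarrow> real"
  assumes pol: "policy lmax lam" and st: "stationary lam p"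
    and nonneg: "\<forall>x\<in>{0..lmax}. 0 \<le> F x"
    and tangent: "\<forall>x\<in>{0..lmax}. F x \<le> F 1 + s * (x - 1)"
    and quad: "\<forall>x\<in>{1..lmax}. F x \<le> F 1 + s * (x - 1) - c * (x - 1)\<^sup>2"
    and Fstar: "F 1 \<le> Fstar lmax F" and "s > 0" and "c > 0"
    and regret: "regret lmax F lam p \<le> \<epsilon>" and "0 < \<epsilon>" and "\<epsilon> \<le> 1"
  shows "p n \<le> (1 / s + 1 / (2 * c) + 1 / 2) * sqrt \<epsilon>"
proof -
  define u where "u q = max (lam q - 1) 0" for q
  define S where "S = (\<Sum>q. p q * (u q)\<^sup>2)"
  have lam: "0 \<le> lam q" "lam q \<le> lmax" for q using pol by (auto simp: policy_def)
  have p_nonneg: "0 \<le> p q" for q using st by (simp add: stationary_def)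
  have "0 \<le> u q" "u q \<le> lmax" for q using lam[of q] lam(1)[of 0] by (auto simp: u_def)
  then have u_summable: "summable (\<lambda>q. p q * (u q)\<^sup>2)"
    by (intro stationary_summable_bounded[OF st, of _ "lmax\<^sup>2"]) (auto intro!: power_mono)
  have "s * p 0 + c * S \<le> \<epsilon>"
    using regret_ge_quadratic_deficit[OF pol st nonneg tangent quad Fstar] regret
    by (simp add: S_def u_def)
  moreover have "0 \<le> S" unfolding S_def using u_summable p_nonneg by (intro suminf_nonneg) auto
  moreover have "0 \<le> s * p 0" using p_nonneg[of 0] \<open>s > 0\<close> by simp
  ultimately have "s * p 0 \<le> \<epsilon>" "c * S \<le> \<epsilon>" using \<open>c > 0\<close> by (smt (verit) mult_nonneg_nonneg)+
  then have p0: "p 0 \<le> \<epsilon> / s" and S: "S \<le> \<epsilon> / c"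
    using \<open>s > 0\<close> \<open>c > 0\<close> by (simp_all add: field_simps)
  have "p (Suc q) \<le> p q * (1 + u q)" for q
    using stationary_Suc[OF st, of q] p_nonneg[of q] by (auto simp: u_def intro!: mult_left_mono)
  then have "p n \<le> p 0 + S / (2 * sqrt \<epsilon>) + sqrt \<epsilon> / 2"
    unfolding S_def using \<open>0 < \<epsilon>\<close> st
    by (intro le_of_growth_bound[OF p_nonneg _ _ u_summable]) (auto simp: stationary_def)
  also have "\<dots> \<le> \<epsilon> / s + \<epsilon> / c / (2 * sqrt \<epsilon>) + sqrt \<epsilon> / 2"
    using p0 S \<open>0 < \<epsilon>\<close> by (intro add_mono divide_right_mono) auto
  also have "\<epsilon> / c / (2 * sqrt \<epsilon>) = 1 / (2 * c) * sqrt \<epsilon>"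
  proof -
    have "\<epsilon> / c / (2 * sqrt \<epsilon>) = sqrt \<epsilon> * sqrt \<epsilon> / (sqrt \<epsilon> * (2 * c))"
      using \<open>0 < \<epsilon>\<close> by (simp add: mult.commute)
    also have "\<dots> = sqrt \<epsilon> / (2 * c)"
      using \<open>0 < \<epsilon>\<close> by (intro nonzero_mult_divide_mult_cancel_left) simp
    finally show ?thesis by simp
  qed
  also have "\<epsilon> / s \<le> 1 / s * sqrt \<epsilon>"
  proof -
    have "\<epsilon> = sqrt \<epsilon> * sqrt \<epsilon>" using \<open>0 < \<epsilon>\<close> by simp
    also have "\<dots> \<le> sqrt \<epsilon>" using \<open>\<epsilon> \<le> 1\<close> \<open>0 < \<epsilon>\<close> by (intro mult_left_le) auto
    finally show ?thesis using \<open>s > 0\<close> by (simp add: divide_right_mono)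
  qed
  finally show ?thesis by (simp add: algebra_simps)
qed

lemma quadratic_deficit_at_1:
  fixes F F' F'' :: "real \<Rightarrow> real"
  assumes lmax: "lmax > 1" and conc: "concave_on {0..lmax} F"
    and deriv1: "\<forall>x\<in>{0..lmax}. (F has_real_derivative F' x) (at x within {0..lmax})"
    and cont1: "continuous_on {0..lmax} F'"
    and deriv2: "\<forall>x\<in>{1<..lmax}. (F' has_real_derivative F'' x) (at x within {1<..lmax})"
    and lim: "(F'' \<longlongrightarrow> L) (at_right 1)" and "L < 0"
  shows "\<exists>c>0. \<forall>x\<in>{1..lmax}. F x \<le> F 1 + F' 1 * (x - 1) - c * (x - 1)\<^sup>2"
proof (rule quadratic_bound_right[OF lmax _ _ _ _ _ lim \<open>L < 0\<close>])
  show "concave_on {1..lmax} F"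
    using conc by (auto simp: concave_on_def intro: convex_on_subset)
  have "continuous_on {0..lmax} F" using deriv1 by (intro DERIV_continuous_on) auto
  then show "continuous_on {1..lmax} F" by (rule continuous_on_subset) auto
  show "continuous_on {1..lmax} F'" by (rule continuous_on_subset[OF cont1]) auto
  show "(F has_real_derivative F' x) (at x)" if "1 < x" "x < lmax" for x
    using deriv1[rule_format, of x] at_within_interior[of x "{0..lmax}"] that by simp
  show "(F' has_real_derivative F'' x) (at x)" if "1 < x" "x < lmax" for x
    using deriv2[rule_format, of x] at_within_interior[of x "{1<..lmax}"] that by simp
qed

lemma mean_queue_ge_inv_sqrt_regret:
  fixes F :: "real \<Rightarrow> real" and lam p :: "nat \<Rightarrow> real" and s c :: real
  defines "K \<equiv> 1 / s + 1 / (2 * c) + 1 / 2"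
  assumes pol: "policy lmax lam" and st: "stationary lam p"
    and nonneg: "\<forall>x\<in>{0..lmax}. 0 \<le> F x"
    and tangent: "\<forall>x\<in>{0..lmax}. F x \<le> F 1 + s * (x - 1)"
    and quad: "\<forall>x\<in>{1..lmax}. F x \<le> F 1 + s * (x - 1) - c * (x - 1)\<^sup>2"
    and Fstar: "F 1 \<le> Fstar lmax F" and "s > 0" and "c > 0"
    and regret: "regret lmax F lam p \<le> \<epsilon>" and "0 < \<epsilon>" and "\<epsilon> \<le> min 1 ((1 / (8 * K))\<^sup>2)"
  shows "ereal (3 / (32 * K) / sqrt \<epsilon>) \<le> mean_queue p"
proof -
  have "K > 0" using \<open>s > 0\<close> \<open>c > 0\<close> by (simp add: K_def add_pos_pos)
  have "p i \<le> K * sqrt \<epsilon>" for i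
    unfolding K_def using assms(2-) by (intro stationary_le_sqrt_regret) auto
  moreover have "sqrt \<epsilon> \<le> 1 / (8 * K)"
    using real_sqrt_le_mono[of \<epsilon> "(1 / (8 * K))\<^sup>2"] \<open>\<epsilon> \<le> min 1 _\<close> \<open>K > 0\<close> by simp
  then have "K * sqrt \<epsilon> \<le> 1 / 8" using \<open>K > 0\<close> by (simp add: field_simps)
  ultimately have "ereal (3 / (32 * (K * sqrt \<epsilon>))) \<le> mean_queue p"
    using st \<open>K > 0\<close> \<open>0 < \<epsilon>\<close> by (intro mean_queue_ge_of_le) (auto simp: stationary_def)
  then show ?thesis by (simp add: mult.assoc)
qed

theorem proposition6p1:
  fixes lmax M :: real and F F' F'' F''' :: "real \<Rightarrow> real"
  assumes lmax: "lmax > 1"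
    and nonneg: "\<forall>x\<in>{0..lmax}. 0 \<le> F x"
    and F0: "F 0 = 0"
    and deriv1: "\<forall>x\<in>{0..lmax}. (F has_real_derivative F' x) (at x within {0..lmax})"
    and cont1: "continuous_on {0..lmax} F'"
    and concave: "strict_concave_on {0..lmax} F"
    and below: "\<forall>x\<in>{0..<1}. F x < Fstar lmax F"
    and pos_deriv: "F' 1 > 0"
    and deriv2: "\<forall>x\<in>{1<..lmax}. (F' has_real_derivative F'' x) (at x within {1<..lmax})"
    and deriv3: "\<forall>x\<in>{1<..lmax}. (F'' has_real_derivative F''' x) (at x within {1<..lmax})"
    and cont3: "continuous_on {1<..lmax} F'''"
    and lim2: "\<exists>L<0. (F'' \<longlongrightarrow> L) (at_right 1)"
    and bound3: "\<forall>x\<in>{1<..lmax}. \<bar>F''' x\<bar> \<le> M"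
  shows "\<exists>C1>0. \<exists>\<epsilon>0>0. \<forall>\<epsilon>. 0 < \<epsilon> \<and> \<epsilon> \<le> \<epsilon>0 \<longrightarrow>
           ereal (C1 / sqrt \<epsilon>) \<le> qstar lmax F \<epsilon>"
proof -
  have conc: "concave_on {0..lmax} F" by (rule strict_concave_on_imp_concave_on[OF _ concave]) simp
  have tangent: "\<forall>x\<in>{0..lmax}. F x \<le> F 1 + F' 1 * (x - 1)"
    using concave_on_below_tangent[OF conc] deriv1 lmax by (simp add: connected_Icc)
  obtain c where "c > 0"
    and quad: "\<forall>x\<in>{1..lmax}. F x \<le> F 1 + F' 1 * (x - 1) - c * (x - 1)\<^sup>2"
    using lim2 quadratic_deficit_at_1[OF lmax conc deriv1 cont1 deriv2] by blast
  have "continuous_on {0..lmax} F" using deriv1 by (intro DERIV_continuous_on) auto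
  then have Fstar: "F 1 \<le> Fstar lmax F" using Fstar_ge lmax by simp
  define K where "K = 1 / F' 1 + 1 / (2 * c) + 1 / 2"
  have "ereal (3 / (32 * K) / sqrt \<epsilon>) \<le> qstar lmax F \<epsilon>"
    if "0 < \<epsilon>" "\<epsilon> \<le> min 1 ((1 / (8 * K))\<^sup>2)" for \<epsilon>
    unfolding qstar_def
  proof (rule Inf_greatest, clarify)
    fix lam p assume "policy lmax lam" "stationary lam p" "regret lmax F lam p \<le> \<epsilon>"
    then show "ereal (3 / (32 * K) / sqrt \<epsilon>) \<le> mean_queue p"
      using mean_queue_ge_inv_sqrt_regret[OF _ _ nonneg tangent quad Fstar pos_deriv \<open>c > 0\<close>] that
      unfolding K_def by blast
  qed
  moreover have "K > 0" using pos_deriv \<open>c > 0\<close> by (simp add: K_def add_pos_pos)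
  then have "0 < 3 / (32 * K)" "0 < min 1 ((1 / (8 * K))\<^sup>2)" by simp_all
  ultimately show ?thesis by blast
qed

end
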